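(* In the SquaredEquality formula $EQ^2(n)$, every universal literal occurrence ($u_i$, $\overline{u_i}$, $v_j$, $\overline{v_j}$) in every clause is a QRAT-literal, and hence can be removed from its clause by the QRATU rule.
   Context: A QBF $Q.\phi$ has quantifier prefix $Q$ and CNF matrix $\phi$; $k\le_Q \ell$ means the variable of $k$ is quantified at or to the left of the block of $\ell$. The SquaredEquality formula is $EQ^2(n) := Q(n).eq^2(n)$ with prefix $Q(n) := \exists\{x_1,y_1,\dots,x_n,y_n\}\,\forall\{u_1,v_1,\dots,u_n,v_n\}\,\exists\{t_{i,j} : i,j\in[n]\}$ and matrix consisting of the clauses $\{x_i,y_j,u_i,v_j,t_{i,j}\}$, $\{x_i,\overline{y_j},u_i,\overline{v_j},t_{i,j}\}$, $\{\overline{x_i},y_j,\overline{u_i},v_j,t_{i,j}\}$, $\{\overline{x_i},\overline{y_j},\overline{u_i},\overline{v_j},t_{i,j}\}$ for $i,j\in[n]$, and the clause $(\overline{t_{i,j}} : i,j\in[n])$. Unit propagation on a CNF $F$ repeatedly sets unit-clause literals true (removing satisfied clauses and deleting false literals) until no unit clause remains or the empty clause appears. A clause $C$ is an asymmetric tautology (AT) w.r.t. $\phi$ if unit propagation on $\phi\wedge\overline{C}$ derives the empty clause (in particular every tautological clause is an AT). The outer resolvent of $C\vee\ell$ and $D\vee\overline{\ell}$ is $OR(Q,C,D,\ell) := C\cup\{k\in D : k\le_Q \ell\}$. A literal $\ell$ is a QRAT-literal in the clause $C\vee\ell$ w.r.t. $Q.\phi$ if for every clause $D\vee\overline{\ell}\in\phi$,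 $OR(Q,C,D,\ell)$ is an AT w.r.t. $\phi$. The QRATU rule of the QRAT proof system allows deleting a universal QRAT-literal from its clause. *)

theory Defs
  imports Main
begin

datatype 'v lit = Pos 'v | Neg 'v

fun var :: "'v lit \<Rightarrow> 'v" where
  "var (Pos x) = x" | "var (Neg x) = x"

fun neg :: "'v lit \<Rightarrow> 'v lit" where
  "neg (Pos x) = Neg x" | "neg (Neg x) = Pos x"

type_synonym 'v clause = "'v lit set"
type_synonym 'v cnf = "'v clause set"

datatype quant = Exists | Forall

text \<open>A quantifier prefix is a list of blocks, leftmost first.\<close>
type_synonym 'v prefix = "(quant \<times> 'v set) list"

definition le_Q :: "'v prefix \<Rightarrow> 'v lit \<Rightarrow> 'v lit \<Rightarrow> bool" where
  "le_Q Q k l \<longleftrightarrow> (\<exists>i j. i \<le> j \<and> j < length Q \<and> var k \<in> snd (Q ! i) \<and> var l \<in> snd (Q ! j))"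

definition universal :: "'v prefix \<Rightarrow> 'v lit \<Rightarrow> bool" where
  "universal Q l \<longleftrightarrow> (\<exists>i < length Q. fst (Q ! i) = Forall \<and> var l \<in> snd (Q ! i))"

definition up_step :: "'v cnf \<Rightarrow> 'v cnf \<Rightarrow> bool" where
  "up_step F F' \<longleftrightarrow> (\<exists>l. {l} \<in> F \<and> F' = (\<lambda>C. C - {neg l}) ` {C \<in> F. l \<notin> C})"

definition up_refutes :: "'v cnf \<Rightarrow> bool" where
  "up_refutes F \<longleftrightarrow> (\<exists>F'. up_step\<^sup>*\<^sup>* F F' \<and> {} \<in> F')"

definition neg_clause :: "'v clause \<Rightarrow> 'v cnf" where
  "neg_clause C = (\<lambda>k. {neg k}) ` C"

definition asym_taut :: "'v cnf \<Rightarrow> 'v clause \<Rightarrow> bool" where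
  "asym_taut \<phi> C \<longleftrightarrow> up_refutes (\<phi> \<union> neg_clause C)"

definition outer_resolvent :: "'v prefix \<Rightarrow> 'v clause \<Rightarrow> 'v clause \<Rightarrow> 'v lit \<Rightarrow> 'v clause" where
  "outer_resolvent Q C D l = C \<union> {k \<in> D. le_Q Q k l}"

definition qrat_literal :: "'v prefix \<Rightarrow> 'v cnf \<Rightarrow> 'v clause \<Rightarrow> 'v lit \<Rightarrow> bool" where
  "qrat_literal Q \<phi> C l \<longleftrightarrow> l \<in> C \<and>
     (\<forall>D' \<in> \<phi>. neg l \<in> D' \<longrightarrow> asym_taut \<phi> (outer_resolvent Q (C - {l}) (D' - {neg l}) l))"

definition qratu_step :: "'v prefix \<Rightarrow> 'v cnf \<Rightarrow> 'v cnf \<Rightarrow> bool" where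
  "qratu_step Q \<phi> \<phi>' \<longleftrightarrow> (\<exists>C l. C \<in> \<phi> \<and> l \<in> C \<and> universal Q l \<and> qrat_literal Q \<phi> C l \<and>
      \<phi>' = insert (C - {l}) (\<phi> - {C}))"

datatype eqvar = X nat | Y nat | U nat | V nat | T nat nat

definition Q2 :: "nat \<Rightarrow> eqvar prefix" where
  "Q2 n = [(Exists, {X i | i. i \<in> {1..n}} \<union> {Y i | i. i \<in> {1..n}}),
           (Forall, {U i | i. i \<in> {1..n}} \<union> {V i | i. i \<in> {1..n}}),
           (Exists, {T i j | i j. i \<in> {1..n} \<and> j \<in> {1..n}})]"

definition eq2 :: "nat \<Rightarrow> eqvar cnf" where
  "eq2 n = (\<Union>i \<in> {1..n}. \<Union>j \<in> {1..n}.
      {{Pos (X i), Pos (Y j), Pos (U i), Pos (V j), Pos (T i j)},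
       {Pos (X i), Neg (Y j), Pos (U i), Neg (V j), Pos (T i j)},
       {Neg (X i), Pos (Y j), Neg (U i), Pos (V j), Pos (T i j)},
       {Neg (X i), Neg (Y j), Neg (U i), Neg (V j), Pos (T i j)}})
    \<union> {{Neg (T i j) | i j. i \<in> {1..n} \<and> j \<in> {1..n}}}"

end

theory Submission
  imports Defs
begin

text \<open>Every universal literal of \<open>EQ\<^sup>2(n)\<close> has an existential partner of the same polarity in
  an earlier block (\<open>x\<^sub>i\<close> for \<open>u\<^sub>i\<close>, \<open>y\<^sub>j\<close> for \<open>v\<^sub>j\<close>), and every clause of the matrix containing a
  literal also contains its partner. Hence if \<open>l\<close> occurs in \<open>C\<close> and \<open>\<not>l\<close> in \<open>D\<close>, the partner
  \<open>p\<close> of \<open>l\<close> lies in \<open>C\<close> and \<open>\<not>p\<close> lies in \<open>D\<close> and is outer with respect to \<open>l\<close>, so every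
  outer resolvent on \<open>l\<close> contains the complementary pair \<open>p, \<not>p\<close> and is a tautology.\<close>

lemma neg_neg [simp]: "neg (neg k) = k"
  by (cases k) auto

lemma neg_neq [simp]: "neg k \<noteq> k"
  by (cases k) auto

lemma neg_inject [simp]: "neg k = neg l \<longleftrightarrow> k = l"
  by (metis neg_neg)

lemma var_neg [simp]: "var (neg k) = var k"
  by (cases k) auto

lemma neg_map_lit: "neg (map_lit f k) = map_lit f (neg k)"
  by (cases k) auto

lemma var_map_lit: "var (map_lit f k) = f (var k)"
  by (cases k) auto

lemma asym_taut_if_tautology:
  assumes "p \<in> C" and "neg p \<in> C"
  shows "asym_taut \<phi> C"
proof -
  let ?F = "\<phi> \<union> neg_clause C"
  let ?F' = "(\<lambda>D. D - {neg (neg p)}) ` {D \<in> ?F. neg p \<notin> D}"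
  have "{neg p} \<in> ?F" and "{p} \<in> ?F"
    using assms unfolding neg_clause_def by force+
  then have "up_step ?F ?F'"
    unfolding up_step_def by blast
  moreover have "{} \<in> ?F'"
  proof -
    have "{p} \<in> {D \<in> ?F. neg p \<notin> D}"
      using \<open>{p} \<in> ?F\<close> by simp
    then have "{p} - {neg (neg p)} \<in> ?F'"
      by (rule imageI)
    then show ?thesis
      by simp
  qed
  ultimately show ?thesis
    unfolding asym_taut_def up_refutes_def by blast
qed

lemma qrat_literal_if_partner:
  assumes "l \<in> C" and "p \<in> C" and "p \<noteq> l"
    and "\<And>D. D \<in> \<phi> \<Longrightarrow> neg l \<in> D \<Longrightarrow> neg p \<in> D"
    and "le_Q Q (neg p) l"
  shows "qrat_literal Q \<phi> C l"
  unfolding qrat_literal_def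
proof (intro conjI ballI impI)
  fix D assume "D \<in> \<phi>" and "neg l \<in> D"
  then have "neg p \<in> outer_resolvent Q (C - {l}) (D - {neg l}) l"
    using assms(3-5) unfolding outer_resolvent_def by auto
  moreover have "p \<in> outer_resolvent Q (C - {l}) (D - {neg l}) l"
    using assms(2,3) unfolding outer_resolvent_def by auto
  ultimately show "asym_taut \<phi> (outer_resolvent Q (C - {l}) (D - {neg l}) l)"
    by (rule asym_taut_if_tautology[rotated])
qed (fact assms(1))

fun partner_var :: "eqvar \<Rightarrow> eqvar" where
  "partner_var (U i) = X i"
| "partner_var (V j) = Y j"
| "partner_var v = v"

lemma eq2_partner_closed:
  assumes "D \<in> eq2 n" and "k \<in> D"
  shows "map_lit partner_var k \<in> D"
  using assms unfolding eq2_def by auto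

lemma universal_Q2_cases:
  assumes "universal (Q2 n) l"
  obtains i where "i \<in> {1..n}" and "var l = U i \<or> var l = V i"
  using assms unfolding universal_def Q2_def by (auto simp: less_Suc_eq nth_Cons')

lemma le_Q2_partner:
  assumes "universal (Q2 n) l" and "var k = partner_var (var l)"
  shows "le_Q (Q2 n) k l"
proof -
  obtain i where "i \<in> {1..n}" and "var l = U i \<or> var l = V i"
    using assms(1) by (rule universal_Q2_cases)
  then show ?thesis
    using assms(2) unfolding le_Q_def Q2_def
    by (intro exI[of _ 0] exI[of _ 1]) auto
qed

lemma partner_var_universal_neq:
  assumes "universal (Q2 n) l"
  shows "partner_var (var l) \<noteq> var l"
  using assms by (rule universal_Q2_cases) auto

lemma qrat_literal_eq2:
  assumes "C \<in> eq2 n" and "l \<in> C" and "universal (Q2 n) l"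
  shows "qrat_literal (Q2 n) (eq2 n) C l"
proof (rule qrat_literal_if_partner)
  let ?p = "map_lit partner_var l"
  show "?p \<in> C"
    using assms(1,2) by (rule eq2_partner_closed)
  show "?p \<noteq> l"
    using partner_var_universal_neq[OF assms(3)] by (metis var_map_lit)
  show "neg ?p \<in> D" if "D \<in> eq2 n" and "neg l \<in> D" for D
    using eq2_partner_closed[OF that] by (simp add: neg_map_lit)
  show "le_Q (Q2 n) (neg ?p) l"
    using assms(3) by (rule le_Q2_partner) (simp add: neg_map_lit var_map_lit)
qed (fact assms(2))

theorem lemma9:
  assumes "C \<in> eq2 n" and "l \<in> C" and "universal (Q2 n) l"
  shows "qrat_literal (Q2 n) (eq2 n) C l \<and> qratu_step (Q2 n) (eq2 n) (insert (C - {l}) (eq2 n - {C}))"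
  using qrat_literal_eq2[OF assms] assms unfolding qratu_step_def by blast

end
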